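(* Let $(M,c,\nabla)$ be a non-closed Lorentzian Weyl manifold of dimension $n+2\geq4$ with recurrent curvature tensor $R$, and let $U$ be a coordinate neighborhood with coordinates $v,x^1,\dots,x^n,u$ on which $c$ is represented by $g=2\,dv\,du+\sum_{i=1}^{n-1}(dx^i)^2+e^{-2F}(dx^n)^2+a(u)\sum_{i=1}^{n-1}(x^i)^2(du)^2$ with corresponding 1-form $\omega=\partial_uF\,du$, where $F=F(x^n,u)$ satisfies $\partial_u^2F-(\partial_uF)^2=-a(u)$ and $\partial_{x^n}\partial_uF$ is nowhere vanishing. Then the conformal class of $g$ on $U$ contains a metric $h$ satisfying $$\nabla h=-2\omega_h\otimes h,\qquad \nabla R=-3\omega_h\otimes R,$$ and such a metric is unique up to homothety.
   Context: A Lorentzian Weyl manifold is a triple $(M,c,\nabla)$ with $M$ a connected manifold, $c$ a conformal class of Lorentzian metrics, $\nabla$ a torsion-free connection with $\nabla g=-2\omega_g\otimes g$ for each $g\in c$ and some 1-form $\omega_g$. It is closed if $d\omega_g=0$. $R$ is recurrent if $\nabla R=\theta\otimes R$ for some 1-form $\theta$. Homothetic metrics differ by a positive constant factor. *)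

theory Defs
  imports "HOL-Analysis.Analysis"
begin

definition pdv :: "'a::euclidean_space \<Rightarrow> ('a \<Rightarrow> real) \<Rightarrow> 'a \<Rightarrow> real" where
  "pdv b f x = deriv (\<lambda>t. f (x + t *\<^sub>R b)) 0"

definition smooth_on :: "'a::euclidean_space set \<Rightarrow> ('a \<Rightarrow> real) \<Rightarrow> bool" where
  "smooth_on S f \<longleftrightarrow> open S \<and>
     (\<forall>bs. set bs \<subseteq> Basis \<longrightarrow>
        continuous_on S (foldr pdv bs f) \<and>
        (\<forall>b\<in>Basis. \<forall>x\<in>S. (\<lambda>t. foldr pdv bs f (x + t *\<^sub>R b)) differentiable (at 0)))"

definition cpd :: "'i::finite \<Rightarrow> (real^'i \<Rightarrow> real) \<Rightarrow> real^'i \<Rightarrow> real" where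
  "cpd k f = pdv (axis k 1) f"

text \<open>A connection is given by Christoffel symbols \<open>\<Gamma> k a b\<close> = Gamma^k_{ab},
  i.e. nabla_{d_a} d_b = sum_k Gamma^k_{ab} d_k.\<close>

definition nabla2 ::
  "('i::finite \<Rightarrow> 'i \<Rightarrow> 'i \<Rightarrow> real^'i \<Rightarrow> real) \<Rightarrow> ('i \<Rightarrow> 'i \<Rightarrow> real^'i \<Rightarrow> real)
     \<Rightarrow> 'i \<Rightarrow> 'i \<Rightarrow> 'i \<Rightarrow> real^'i \<Rightarrow> real" where
  "nabla2 \<Gamma> h a b c p =
     cpd a (h b c) p - (\<Sum>d\<in>UNIV. \<Gamma> d a b p * h d c p) - (\<Sum>d\<in>UNIV. \<Gamma> d a c p * h b d p)"

text \<open>Curvature tensor R^d_{cab} (components of R(d_a,d_b)d_c).\<close>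
definition curv ::
  "('i::finite \<Rightarrow> 'i \<Rightarrow> 'i \<Rightarrow> real^'i \<Rightarrow> real) \<Rightarrow> 'i \<Rightarrow> 'i \<Rightarrow> 'i \<Rightarrow> 'i \<Rightarrow> real^'i \<Rightarrow> real" where
  "curv \<Gamma> d c a b p =
     cpd a (\<Gamma> d b c) p - cpd b (\<Gamma> d a c) p
     + (\<Sum>e\<in>UNIV. \<Gamma> d a e p * \<Gamma> e b c p - \<Gamma> d b e p * \<Gamma> e a c p)"

definition nabla13 ::
  "('i::finite \<Rightarrow> 'i \<Rightarrow> 'i \<Rightarrow> real^'i \<Rightarrow> real) \<Rightarrow> ('i \<Rightarrow> 'i \<Rightarrow> 'i \<Rightarrow> 'i \<Rightarrow> real^'i \<Rightarrow> real)
     \<Rightarrow> 'i \<Rightarrow> 'i \<Rightarrow> 'i \<Rightarrow> 'i \<Rightarrow> 'i \<Rightarrow> real^'i \<Rightarrow> real" where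
  "nabla13 \<Gamma> T e d c a b p =
     cpd e (T d c a b) p
     + (\<Sum>f\<in>UNIV. \<Gamma> d e f p * T f c a b p)
     - (\<Sum>f\<in>UNIV. \<Gamma> f e c p * T d f a b p)
     - (\<Sum>f\<in>UNIV. \<Gamma> f e a p * T d c f b p)
     - (\<Sum>f\<in>UNIV. \<Gamma> f e b p * T d c a f p)"

definition weyl_connection ::
  "(real^'i::finite) set \<Rightarrow> ('i \<Rightarrow> 'i \<Rightarrow> real^'i \<Rightarrow> real) \<Rightarrow> ('i \<Rightarrow> real^'i \<Rightarrow> real)
     \<Rightarrow> ('i \<Rightarrow> 'i \<Rightarrow> 'i \<Rightarrow> real^'i \<Rightarrow> real) \<Rightarrow> bool" where
  "weyl_connection U g w \<Gamma> \<longleftrightarrow>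
     (\<forall>k a b. smooth_on U (\<Gamma> k a b)) \<and>
     (\<forall>k a b. \<forall>p\<in>U. \<Gamma> k a b p = \<Gamma> k b a p) \<and>
     (\<forall>a b c. \<forall>p\<in>U. nabla2 \<Gamma> g a b c p = - 2 * w a p * g b c p)"

definition conformal_on ::
  "(real^'i::finite) set \<Rightarrow> ('i \<Rightarrow> 'i \<Rightarrow> real^'i \<Rightarrow> real) \<Rightarrow> ('i \<Rightarrow> 'i \<Rightarrow> real^'i \<Rightarrow> real) \<Rightarrow> bool" where
  "conformal_on U g h \<longleftrightarrow>
     (\<exists>\<phi>. smooth_on U \<phi> \<and> (\<forall>p\<in>U. \<phi> p > 0) \<and> (\<forall>i j. \<forall>p\<in>U. h i j p = \<phi> p * g i j p))"

text \<open>Coordinates: index iv is v, iu is u, ixn is x^n; the remaining indices are x^1..x^{n-1}.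
  F is a function of (x^n, u).\<close>
definition ppw_metric ::
  "'i \<Rightarrow> 'i \<Rightarrow> 'i \<Rightarrow> (real \<times> real \<Rightarrow> real) \<Rightarrow> (real \<Rightarrow> real)
     \<Rightarrow> 'i::finite \<Rightarrow> 'i \<Rightarrow> real^'i \<Rightarrow> real" where
  "ppw_metric iv iu ixn F a i j p =
     (if (i = iv \<and> j = iu) \<or> (i = iu \<and> j = iv) then 1
      else if i = j \<and> i \<notin> {iv, iu, ixn} then 1
      else if i = ixn \<and> j = ixn then exp (- 2 * F (p $ ixn, p $ iu))
      else if i = iu \<and> j = iu then a (p $ iu) * (\<Sum>k\<in>UNIV - {iv, iu, ixn}. (p $ k)^2)
      else 0)"

definition ppw_form ::
  "'i \<Rightarrow> 'i \<Rightarrow> (real \<times> real \<Rightarrow> real) \<Rightarrow> 'i::finite \<Rightarrow> real^'i \<Rightarrow> real" where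
  "ppw_form iu ixn F k p = (if k = iu then pdv (0, 1) F (p $ ixn, p $ iu) else 0)"

end

theory Submission
  imports Defs
begin

(* Metric compatibility in the coordinates of g forces Gamma^u_ab = 2 (d_u F) delta^u_a delta^u_b
   and Gamma^x_ex = omega_e - d_e F (x = x^n), so the curvature component R^u_uxu equals
   2 d_x d_u F and never vanishes.  Evaluating nabla R = theta (x) R on this component gives
   theta = d log|d_x d_u F| + dF - 3 omega.  For h = phi g one has
   nabla h = (d log phi - 2 omega) (x) h, so phi = |d_x d_u F|^(2/3) exp(2F/3) gives
   omega_h = -theta/3, i.e. nabla R = -3 omega_h (x) R.  Conversely R /= 0 forces
   omega_h = -theta/3 for every such h, which fixes d log phi; on the connected U this
   determines phi up to a positive constant. *)

lemma eventually_line_in_open: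
  fixes x b :: "'a::real_normed_vector"
  assumes "open S" "x \<in> S"
  shows "\<forall>\<^sub>F t in nhds (0::real). x + t *\<^sub>R b \<in> S"
proof -
  have "isCont (\<lambda>t::real. x + t *\<^sub>R b) 0"
    by (intro continuous_intros)
  then have "((\<lambda>t::real. x + t *\<^sub>R b) \<longlongrightarrow> x) (nhds 0)"
    by (simp add: isCont_def tendsto_nhds_iff)
  then show ?thesis using assms by (metis topological_tendstoD)
qed

lemma line_derivative_cong_open:
  fixes f g :: "'a::real_normed_vector \<Rightarrow> real"
  assumes "open S" "x \<in> S" "\<forall>y\<in>S. f y = g y"
    and "((\<lambda>t. f (x + t *\<^sub>R b)) has_real_derivative D) (at 0)"
  shows "((\<lambda>t. g (x + t *\<^sub>R b)) has_real_derivative D) (at 0)"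
proof -
  have "\<forall>\<^sub>F t in nhds 0. f (x + t *\<^sub>R b) = g (x + t *\<^sub>R b)"
    using eventually_line_in_open[OF assms(1,2), of b] assms(3) by (auto elim: eventually_mono)
  from DERIV_cong_ev[OF refl this refl] show ?thesis
    using assms(4) by simp
qed

lemma line_differentiable_cong_open:
  fixes f g :: "'a::real_normed_vector \<Rightarrow> real"
  assumes "open S" "x \<in> S" "\<forall>y\<in>S. f y = g y"
    and "(\<lambda>t. f (x + t *\<^sub>R b)) differentiable (at 0)"
  shows "(\<lambda>t. g (x + t *\<^sub>R b)) differentiable (at 0)"
  using assms line_derivative_cong_open[OF assms(1-3)] real_differentiable_def by metis

lemma pdv_eqI:
  "((\<lambda>t. f (x + t *\<^sub>R b)) has_real_derivative D) (at 0) \<Longrightarrow> pdv b f x = D"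
  unfolding pdv_def by (rule DERIV_imp_deriv)

lemma pdv_has_real_derivative:
  "(\<lambda>t. f (x + t *\<^sub>R b)) differentiable (at 0) \<Longrightarrow>
     ((\<lambda>t. f (x + t *\<^sub>R b)) has_real_derivative pdv b f x) (at 0)"
  unfolding pdv_def using DERIV_deriv_iff_real_differentiable by blast

lemma pdv_cong_open:
  assumes "open S" "x \<in> S" "\<forall>y\<in>S. f y = g y"
  shows "pdv b f x = pdv b g x"
  unfolding pdv_def
  using eventually_line_in_open[OF assms(1,2), of b] assms(3)
  by (intro deriv_cong_ev refl) (auto elim: eventually_mono)

lemma pdv_const [simp]: "pdv b (\<lambda>x. c) = (\<lambda>x. 0)"
  unfolding pdv_def by (intro ext DERIV_imp_deriv) simp

lemma pdv_zero_direction [simp]: "pdv 0 f x = 0"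
  unfolding pdv_def by (intro DERIV_imp_deriv) simp

lemma cpd_const [simp]: "cpd k (\<lambda>x. c) p = 0"
  by (simp add: cpd_def)

lemma line_derivative_compose:
  assumes "(\<lambda>t. s (x + t *\<^sub>R b)) differentiable (at 0)" "(g has_real_derivative D) (at (s x))"
  shows "((\<lambda>t. g (s (x + t *\<^sub>R b))) has_real_derivative D * pdv b s x) (at 0)"
proof -
  have "(g has_real_derivative D) (at (s (x + 0 *\<^sub>R b)))" using assms(2) by simp
  from DERIV_chain2[OF this pdv_has_real_derivative[OF assms(1)]] show ?thesis .
qed

definition smooth_upto :: "nat \<Rightarrow> 'a::euclidean_space set \<Rightarrow> ('a \<Rightarrow> real) \<Rightarrow> bool" where
  "smooth_upto n S f \<longleftrightarrow> (\<forall>bs. set bs \<subseteq> Basis \<and> length bs \<le> n \<longrightarrow>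
        continuous_on S (foldr pdv bs f) \<and>
        (\<forall>b\<in>Basis. \<forall>x\<in>S. (\<lambda>t. foldr pdv bs f (x + t *\<^sub>R b)) differentiable (at 0)))"

lemma smooth_on_iff_smooth_upto: "smooth_on S f \<longleftrightarrow> open S \<and> (\<forall>n. smooth_upto n S f)"
  unfolding smooth_on_def smooth_upto_def by blast

lemma smooth_upto_0: "smooth_upto 0 S f \<longleftrightarrow> continuous_on S f \<and>
   (\<forall>b\<in>Basis. \<forall>x\<in>S. (\<lambda>t. f (x + t *\<^sub>R b)) differentiable (at 0))"
  unfolding smooth_upto_def by auto

lemma smooth_upto_Suc:
  "smooth_upto (Suc n) S f \<longleftrightarrow> smooth_upto 0 S f \<and> (\<forall>b\<in>Basis. smooth_upto n S (pdv b f))"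
proof
  assume f: "smooth_upto (Suc n) S f"
  have "smooth_upto n S (pdv b f)" if b: "b \<in> Basis" for b
    unfolding smooth_upto_def
  proof (intro allI impI)
    fix bs :: "'a list" assume "set bs \<subseteq> Basis \<and> length bs \<le> n"
    then have "set (bs @ [b]) \<subseteq> Basis \<and> length (bs @ [b]) \<le> Suc n" using b by auto
    then have "continuous_on S (foldr pdv (bs @ [b]) f) \<and>
        (\<forall>c\<in>Basis. \<forall>x\<in>S. (\<lambda>t. foldr pdv (bs @ [b]) f (x + t *\<^sub>R c)) differentiable at 0)"
      using f unfolding smooth_upto_def by blast
    then show "continuous_on S (foldr pdv bs (pdv b f)) \<and>
        (\<forall>c\<in>Basis. \<forall>x\<in>S. (\<lambda>t. foldr pdv bs (pdv b f) (x + t *\<^sub>R c)) differentiable at 0)"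
      by simp
  qed
  moreover have "smooth_upto 0 S f"
    using spec[OF f[unfolded smooth_upto_def], of "[]"] unfolding smooth_upto_0 by simp
  ultimately show "smooth_upto 0 S f \<and> (\<forall>b\<in>Basis. smooth_upto n S (pdv b f))" by blast
next
  assume f: "smooth_upto 0 S f \<and> (\<forall>b\<in>Basis. smooth_upto n S (pdv b f))"
  show "smooth_upto (Suc n) S f" unfolding smooth_upto_def
  proof (intro allI impI)
    fix bs :: "'a list" assume bs: "set bs \<subseteq> Basis \<and> length bs \<le> Suc n"
    show "continuous_on S (foldr pdv bs f) \<and>
        (\<forall>b\<in>Basis. \<forall>x\<in>S. (\<lambda>t. foldr pdv bs f (x + t *\<^sub>R b)) differentiable (at 0))"
    proof (cases bs rule: rev_exhaust)
      case Nil
      then show ?thesis using f unfolding smooth_upto_def by auto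
    next
      case (snoc cs c)
      then have "c \<in> Basis" "set cs \<subseteq> Basis \<and> length cs \<le> n" using bs by auto
      then have "smooth_upto n S (pdv c f)" using f by auto
      with \<open>set cs \<subseteq> Basis \<and> length cs \<le> n\<close> show ?thesis
        unfolding smooth_upto_def snoc by simp
    qed
  qed
qed

lemma smooth_upto_mono: "smooth_upto n S f \<Longrightarrow> m \<le> n \<Longrightarrow> smooth_upto m S f"
  unfolding smooth_upto_def by auto

lemma smooth_upto_cong_open:
  "open S \<Longrightarrow> \<forall>x\<in>S. f x = g x \<Longrightarrow> smooth_upto n S f \<Longrightarrow> smooth_upto n S g"
proof (induction n arbitrary: f g)
  case 0
  then show ?case unfolding smooth_upto_0
    using continuous_on_cong[of S S f g] line_differentiable_cong_open[of S _ f g] by auto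
next
  case (Suc n)
  have "smooth_upto n S f"
    using Suc.prems(3) by (rule smooth_upto_mono) simp
  then have "smooth_upto n S g"
    by (rule Suc.IH[OF Suc.prems(1,2)])
  then have "smooth_upto 0 S g"
    by (rule smooth_upto_mono) simp
  moreover have "smooth_upto n S (pdv b g)" if "b \<in> Basis" for b
  proof -
    have "\<forall>x\<in>S. pdv b f x = pdv b g x"
      using pdv_cong_open[OF Suc.prems(1) _ Suc.prems(2)] by blast
    then show ?thesis
      using Suc.IH[OF Suc.prems(1)] Suc.prems(3) that unfolding smooth_upto_Suc by blast
  qed
  ultimately show ?case unfolding smooth_upto_Suc by blast
qed

lemma smooth_upto_const: "smooth_upto n S (\<lambda>x. c)"
  by (induction n arbitrary: c) (simp_all add: smooth_upto_0 smooth_upto_Suc)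

lemma smooth_upto_add:
  assumes "open S"
  shows "smooth_upto n S f \<Longrightarrow> smooth_upto n S g \<Longrightarrow> smooth_upto n S (\<lambda>x. f x + g x)"
proof (induction n arbitrary: f g)
  case 0
  then show ?case unfolding smooth_upto_0 by (auto intro!: continuous_on_add differentiable_add)
next
  case (Suc n)
  have "smooth_upto 0 S (\<lambda>x. f x + g x)"
    using Suc.prems unfolding smooth_upto_Suc smooth_upto_0
    by (auto intro!: continuous_on_add differentiable_add)
  moreover have "smooth_upto n S (pdv b (\<lambda>x. f x + g x))" if b: "b \<in> Basis" for b
  proof (rule smooth_upto_cong_open[OF assms])
    have "pdv b (\<lambda>x. f x + g x) x = pdv b f x + pdv b g x" if "x \<in> S" for x
      using Suc.prems b that unfolding smooth_upto_Suc smooth_upto_0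
      by (intro pdv_eqI DERIV_add pdv_has_real_derivative) auto
    then show "\<forall>x\<in>S. pdv b f x + pdv b g x = pdv b (\<lambda>x. f x + g x) x"
      by simp
    show "smooth_upto n S (\<lambda>x. pdv b f x + pdv b g x)"
      using Suc b unfolding smooth_upto_Suc by blast
  qed
  ultimately show ?case unfolding smooth_upto_Suc by blast
qed

lemma smooth_upto_mult:
  assumes "open S"
  shows "smooth_upto n S f \<Longrightarrow> smooth_upto n S g \<Longrightarrow> smooth_upto n S (\<lambda>x. f x * g x)"
proof (induction n arbitrary: f g)
  case 0
  then show ?case unfolding smooth_upto_0 by (auto intro!: continuous_on_mult differentiable_mult)
next
  case (Suc n)
  have "smooth_upto 0 S (\<lambda>x. f x * g x)"
    using Suc.prems unfolding smooth_upto_Suc smooth_upto_0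
    by (auto intro!: continuous_on_mult differentiable_mult)
  moreover have "smooth_upto n S (pdv b (\<lambda>x. f x * g x))" if b: "b \<in> Basis" for b
  proof (rule smooth_upto_cong_open[OF assms])
    have "pdv b (\<lambda>x. f x * g x) x = pdv b f x * g x + f x * pdv b g x" if "x \<in> S" for x
    proof (rule pdv_eqI)
      have "(\<lambda>t. f (x + t *\<^sub>R b)) differentiable (at 0)" "(\<lambda>t. g (x + t *\<^sub>R b)) differentiable (at 0)"
        using Suc.prems b that unfolding smooth_upto_Suc smooth_upto_0 by blast+
      from DERIV_mult[OF this[THEN pdv_has_real_derivative]]
      show "((\<lambda>t. f (x + t *\<^sub>R b) * g (x + t *\<^sub>R b)) has_real_derivative
             pdv b f x * g x + f x * pdv b g x) (at 0)"
        by (simp add: mult.commute)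
    qed
    then show "\<forall>x\<in>S. pdv b f x * g x + f x * pdv b g x = pdv b (\<lambda>x. f x * g x) x"
      by simp
    have "smooth_upto n S f" "smooth_upto n S g"
      using Suc.prems by (simp_all add: smooth_upto_mono[of "Suc n"])
    moreover have "smooth_upto n S (pdv b f)" "smooth_upto n S (pdv b g)"
      using Suc.prems b unfolding smooth_upto_Suc by auto
    ultimately show "smooth_upto n S (\<lambda>x. pdv b f x * g x + f x * pdv b g x)"
      by (intro smooth_upto_add[OF assms] Suc.IH)
  qed
  ultimately show ?case unfolding smooth_upto_Suc by blast
qed

lemma smooth_on_open: "smooth_on S f \<Longrightarrow> open S"
  by (simp add: smooth_on_iff_smooth_upto)

lemma smooth_on_line_differentiable:
  "smooth_on S f \<Longrightarrow> b \<in> Basis \<Longrightarrow> x \<in> S \<Longrightarrow> (\<lambda>t. f (x + t *\<^sub>R b)) differentiable (at 0)"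
  unfolding smooth_on_iff_smooth_upto by (metis smooth_upto_0)

lemma smooth_on_pdv: "smooth_on S f \<Longrightarrow> b \<in> Basis \<Longrightarrow> smooth_on S (pdv b f)"
  unfolding smooth_on_iff_smooth_upto by (metis smooth_upto_Suc)

lemma smooth_on_const: "open S \<Longrightarrow> smooth_on S (\<lambda>x. c)"
  by (simp add: smooth_on_iff_smooth_upto smooth_upto_const)

lemma smooth_on_mult: "smooth_on S f \<Longrightarrow> smooth_on S g \<Longrightarrow> smooth_on S (\<lambda>x. f x * g x)"
  unfolding smooth_on_iff_smooth_upto by (blast intro: smooth_upto_mult)

lemma smooth_upto_0_compose_real:
  assumes gs: "\<forall>k. \<forall>y\<in>T. (gs k has_real_derivative gs (Suc k) y) (at y)"
    and sT: "\<forall>x\<in>S. s x \<in> T" and s: "smooth_upto 0 S s"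
  shows "smooth_upto 0 S (\<lambda>x. gs k (s x))"
proof -
  have "continuous_on T (gs k)"
    using gs by (intro continuous_at_imp_continuous_on) (auto intro: DERIV_isCont)
  then have "continuous_on S (\<lambda>x. gs k (s x))"
    using continuous_on_compose2[of T "gs k" S s] s sT unfolding smooth_upto_0 by auto
  moreover have "(\<lambda>t. gs k (s (x + t *\<^sub>R b))) differentiable (at 0)" if "b \<in> Basis" "x \<in> S" for b x
    using line_derivative_compose[of s x b "gs k" "gs (Suc k) (s x)"] gs sT s that
    unfolding smooth_upto_0 real_differentiable_def by blast
  ultimately show ?thesis unfolding smooth_upto_0 by blast
qed

lemma smooth_upto_compose_real:
  assumes S: "open S"
    and gs: "\<forall>k. \<forall>y\<in>T. (gs k has_real_derivative gs (Suc k) y) (at y)"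
    and sT: "\<forall>x\<in>S. s x \<in> T"
  shows "smooth_upto n S s \<Longrightarrow> smooth_upto n S (\<lambda>x. gs k (s x))"
proof (induction n arbitrary: k)
  case 0
  then show ?case by (rule smooth_upto_0_compose_real[OF gs sT])
next
  case (Suc n)
  have "smooth_upto n S (pdv b (\<lambda>x. gs k (s x)))" if b: "b \<in> Basis" for b
  proof (rule smooth_upto_cong_open[OF S])
    have "pdv b (\<lambda>x. gs k (s x)) x = gs (Suc k) (s x) * pdv b s x" if "x \<in> S" for x
    proof (rule pdv_eqI)
      have "(\<lambda>t. s (x + t *\<^sub>R b)) differentiable (at 0)"
        using Suc.prems b that unfolding smooth_upto_Suc smooth_upto_0 by blast
      then show "((\<lambda>t. gs k (s (x + t *\<^sub>R b))) has_real_derivative gs (Suc k) (s x) * pdv b s x) (at 0)"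
        using gs sT that by (blast intro: line_derivative_compose)
    qed
    then show "\<forall>x\<in>S. gs (Suc k) (s x) * pdv b s x = pdv b (\<lambda>x. gs k (s x)) x"
      by simp
    have "smooth_upto n S s"
      using Suc.prems by (rule smooth_upto_mono) simp
    moreover have "smooth_upto n S (pdv b s)"
      using Suc.prems b unfolding smooth_upto_Suc by blast
    ultimately show "smooth_upto n S (\<lambda>x. gs (Suc k) (s x) * pdv b s x)"
      by (intro smooth_upto_mult[OF S] Suc.IH)
  qed
  moreover have "smooth_upto 0 S (\<lambda>x. gs k (s x))"
    using Suc.prems unfolding smooth_upto_Suc by (blast intro: smooth_upto_0_compose_real[OF gs sT])
  ultimately show ?case unfolding smooth_upto_Suc by blast
qed

lemma smooth_on_compose_real:
  assumes gs: "\<forall>k. \<forall>y\<in>T. (gs k has_real_derivative gs (Suc k) y) (at y)"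
    and s: "smooth_on S s" and sT: "\<forall>x\<in>S. s x \<in> T"
  shows "smooth_on S (\<lambda>x. gs 0 (s x))"
  using s smooth_upto_compose_real[OF smooth_on_open[OF s] gs sT]
  unfolding smooth_on_iff_smooth_upto by blast

lemma smooth_on_exp: "smooth_on S f \<Longrightarrow> smooth_on S (\<lambda>x. exp (f x))"
  using smooth_on_compose_real[of UNIV "\<lambda>k. exp"] by auto

definition powr_derivs :: "real \<Rightarrow> nat \<Rightarrow> real \<Rightarrow> real" where
  "powr_derivs r k y = (\<Prod>j<k. r - real j) * y powr (r - real k)"

lemma powr_derivs_has_real_derivative:
  assumes "y > 0"
  shows "(powr_derivs r k has_real_derivative powr_derivs r (Suc k) y) (at y)"
proof -
  have "((\<lambda>y. (\<Prod>j<k. r - real j) * y powr (r - real k)) has_real_derivative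
         (\<Prod>j<k. r - real j) * ((r - real k) * y powr (r - real k - 1))) (at y)"
    using assms by (intro DERIV_cmult has_real_derivative_powr) simp
  then show ?thesis
    unfolding powr_derivs_def[abs_def] by (simp add: algebra_simps)
qed

lemma smooth_on_powr:
  "smooth_on S f \<Longrightarrow> \<forall>x\<in>S. f x > 0 \<Longrightarrow> smooth_on S (\<lambda>x. f x powr r)"
  using smooth_on_compose_real[of "{0<..}" "powr_derivs r" S f] powr_derivs_has_real_derivative
  by (simp add: powr_derivs_def)

lemma smooth_on_real_differentiable:
  fixes f :: "real \<Rightarrow> real"
  assumes "smooth_on S f" "y \<in> S"
  shows "f differentiable (at y)"
proof -
  have "(\<lambda>t. f (y + t *\<^sub>R 1)) differentiable (at 0)"
    using smooth_on_line_differentiable[OF assms(1) _ assms(2), of 1] by simp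
  then obtain D where "((\<lambda>t. f (t + y)) has_real_derivative D) (at 0)"
    by (auto simp: real_differentiable_def add.commute)
  then have "(f has_real_derivative D) (at (0 + y))"
    by (rule DERIV_shift[THEN iffD2])
  then show ?thesis
    using real_differentiable_def by auto
qed

definition axis_pair :: "'i::finite \<Rightarrow> 'i \<Rightarrow> 'i \<Rightarrow> real \<times> real" where
  "axis_pair i j k = ((axis k 1 :: real^'i) $ i, (axis k 1 :: real^'i) $ j)"

lemma axis_pair_Basis_or_zero: "i \<noteq> j \<Longrightarrow> axis_pair i j k \<in> Basis \<or> axis_pair i j k = 0"
  by (auto simp: axis_pair_def axis_def Basis_prod_def zero_prod_def)

lemma Basis_vec_obtain_axis:
  assumes "(b :: real^'i) \<in> Basis"
  obtains k where "b = axis k 1"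
  using assms by (auto simp: Basis_vec_def)

lemma axis_in_Basis: "(axis k 1 :: real^'i) \<in> Basis"
  by (auto simp: Basis_vec_def)

lemma coordinate_pair_along_axis:
  "(\<lambda>t. G ((q + t *\<^sub>R axis k 1) $ i, (q + t *\<^sub>R axis k 1) $ j)) =
   (\<lambda>t. G ((q $ i, q $ j) + t *\<^sub>R axis_pair i j k))"
  by (simp add: axis_pair_def algebra_simps)

lemma cpd_coordinate_pair: "cpd k (\<lambda>q. G (q $ i, q $ j)) q = pdv (axis_pair i j k) G (q $ i, q $ j)"
  unfolding cpd_def pdv_def coordinate_pair_along_axis ..

lemma coordinate_pair_has_real_derivative:
  fixes q :: "real^'i"
  assumes "i \<noteq> j" "smooth_on W G" "(q $ i, q $ j) \<in> W"
  shows "((\<lambda>t. G ((q + t *\<^sub>R axis k 1) $ i, (q + t *\<^sub>R axis k 1) $ j)) has_real_derivative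
           pdv (axis_pair i j k) G (q $ i, q $ j)) (at 0)"
  unfolding coordinate_pair_along_axis
proof (cases "axis_pair i j k = 0")
  case True
  then show "((\<lambda>t. G ((q $ i, q $ j) + t *\<^sub>R axis_pair i j k)) has_real_derivative
           pdv (axis_pair i j k) G (q $ i, q $ j)) (at 0)"
    by simp
next
  case False
  then have "axis_pair i j k \<in> Basis" using axis_pair_Basis_or_zero[OF assms(1)] by blast
  then show "((\<lambda>t. G ((q $ i, q $ j) + t *\<^sub>R axis_pair i j k)) has_real_derivative
           pdv (axis_pair i j k) G (q $ i, q $ j)) (at 0)"
    using smooth_on_line_differentiable[OF assms(2) _ assms(3)] by (blast intro: pdv_has_real_derivative)
qed

lemma smooth_upto_0_coordinate_pair:
  fixes U :: "(real^'i) set"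
  assumes "i \<noteq> j" "\<forall>q\<in>U. (q $ i, q $ j) \<in> W" and G: "smooth_upto 0 W G"
  shows "smooth_upto 0 U (\<lambda>q. G (q $ i, q $ j))"
  unfolding smooth_upto_0
proof (intro conjI ballI)
  show "continuous_on U (\<lambda>q. G (q $ i, q $ j))"
    using assms G unfolding smooth_upto_0
    by (intro continuous_on_compose2[of W G U "\<lambda>q. (q $ i, q $ j)"]) (auto intro!: continuous_intros)
  fix b q :: "real^'i" assume "b \<in> Basis" "q \<in> U"
  then obtain k where b: "b = axis k 1" by (auto elim: Basis_vec_obtain_axis)
  have "(\<lambda>t. G ((q $ i, q $ j) + t *\<^sub>R axis_pair i j k)) differentiable (at 0)"
  proof (cases "axis_pair i j k = 0")
    case False
    then have "axis_pair i j k \<in> Basis" using axis_pair_Basis_or_zero[OF assms(1)] by blast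
    then show ?thesis using assms(2) G \<open>q \<in> U\<close> unfolding smooth_upto_0 by blast
  qed simp
  then show "(\<lambda>t. G ((q + t *\<^sub>R b) $ i, (q + t *\<^sub>R b) $ j)) differentiable (at 0)"
    unfolding b coordinate_pair_along_axis .
qed

lemma smooth_upto_coordinate_pair:
  fixes U :: "(real^'i) set"
  assumes "i \<noteq> j" "\<forall>q\<in>U. (q $ i, q $ j) \<in> W"
  shows "smooth_upto n W G \<Longrightarrow> smooth_upto n U (\<lambda>q. G (q $ i, q $ j))"
proof (induction n arbitrary: G)
  case 0
  then show ?case by (rule smooth_upto_0_coordinate_pair[OF assms])
next
  case (Suc n)
  have "smooth_upto n U (pdv b (\<lambda>q. G (q $ i, q $ j)))" if "b \<in> Basis" for b
  proof -
    obtain k where b: "b = axis k 1" using \<open>b \<in> Basis\<close> by (rule Basis_vec_obtain_axis)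
    have "pdv b (\<lambda>q. G (q $ i, q $ j)) = (\<lambda>q. pdv (axis_pair i j k) G (q $ i, q $ j))"
      using cpd_coordinate_pair[of k G i j] unfolding b cpd_def by blast
    moreover have "smooth_upto n U (\<lambda>q. pdv (axis_pair i j k) G (q $ i, q $ j))"
    proof (cases "axis_pair i j k = 0")
      case True
      then show ?thesis by (simp add: smooth_upto_const)
    next
      case False
      then have "smooth_upto n W (pdv (axis_pair i j k) G)"
        using axis_pair_Basis_or_zero[OF assms(1), of k] Suc.prems unfolding smooth_upto_Suc by blast
      then show ?thesis by (rule Suc.IH)
    qed
    ultimately show ?thesis by simp
  qed
  moreover have "smooth_upto 0 U (\<lambda>q. G (q $ i, q $ j))"
    using Suc.prems unfolding smooth_upto_Suc by (blast intro: smooth_upto_0_coordinate_pair[OF assms])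
  ultimately show ?case unfolding smooth_upto_Suc by blast
qed

lemma smooth_on_coordinate_pair:
  fixes U :: "(real^'i) set"
  assumes "i \<noteq> j" "open U" "smooth_on W G" "\<forall>q\<in>U. (q $ i, q $ j) \<in> W"
  shows "smooth_on U (\<lambda>q. G (q $ i, q $ j))"
  using assms smooth_upto_coordinate_pair[OF assms(1,4)] unfolding smooth_on_iff_smooth_upto by blast

lemma constant_along_axis:
  fixes \<psi> :: "real^'i \<Rightarrow> real"
  assumes seg: "\<forall>t\<in>{-\<bar>d\<bar>..\<bar>d\<bar>}. y + t *\<^sub>R axis k 1 \<in> U"
    and D: "\<forall>z\<in>U. ((\<lambda>t. \<psi> (z + t *\<^sub>R axis k 1)) has_real_derivative 0) (at 0)"
  shows "\<psi> (y + d *\<^sub>R axis k 1) = \<psi> y"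
proof -
  define G where "G t = \<psi> (y + t *\<^sub>R axis k 1)" for t
  have "\<exists>c. \<forall>t\<in>{-\<bar>d\<bar>..\<bar>d\<bar>}. G t = c"
  proof (rule has_field_derivative_zero_constant)
    fix t assume t: "t \<in> {-\<bar>d\<bar>..\<bar>d\<bar>}"
    have "(\<lambda>s. \<psi> ((y + t *\<^sub>R axis k 1) + s *\<^sub>R axis k 1)) = (\<lambda>s. G (s + t))"
      unfolding G_def by (simp add: algebra_simps)
    moreover have "y + t *\<^sub>R axis k 1 \<in> U" using seg t by blast
    ultimately have "((\<lambda>s. G (s + t)) has_real_derivative 0) (at 0)"
      using D by fastforce
    then have "(G has_real_derivative 0) (at t)"
      using DERIV_shift[of G 0 0 t] by simp
    then show "(G has_real_derivative 0) (at t within {-\<bar>d\<bar>..\<bar>d\<bar>})"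
      by (rule has_field_derivative_at_within)
  qed simp
  then obtain c where "\<forall>t\<in>{-\<bar>d\<bar>..\<bar>d\<bar>}. G t = c" by blast
  moreover have "d \<in> {-\<bar>d\<bar>..\<bar>d\<bar>}" "0 \<in> {-\<bar>d\<bar>..\<bar>d\<bar>}" by auto
  ultimately have "G d = G 0" by simp
  then show ?thesis unfolding G_def by simp
qed

lemma ball_coordinate_segment:
  fixes x y :: "real^'i"
  assumes "y \<in> ball x r" "\<bar>t\<bar> \<le> \<bar>y $ k - x $ k\<bar>"
  shows "(\<chi> i. if i = k then x $ i else y $ i) + t *\<^sub>R axis k 1 \<in> ball x r"
proof -
  have "norm (x - ((\<chi> i. if i = k then x $ i else y $ i) + t *\<^sub>R axis k 1)) \<le> norm (x - y)"
    by (rule norm_le_componentwise_cart) (use assms(2) in \<open>auto simp: axis_def\<close>)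
  then show ?thesis using assms(1) by (simp add: dist_norm)
qed

(* Only partial derivatives are at hand, not a Frechet derivative, so constancy is
   propagated one coordinate direction at a time. *)
lemma partials_zero_constant_on_ball:
  fixes \<psi> :: "real^'i \<Rightarrow> real"
  assumes sub: "ball x r \<subseteq> U"
    and D: "\<forall>z\<in>U. \<forall>k. ((\<lambda>t. \<psi> (z + t *\<^sub>R axis k 1)) has_real_derivative 0) (at 0)"
  shows "\<forall>y\<in>ball x r. \<psi> y = \<psi> x"
proof -
  have "\<forall>y\<in>ball x r. (\<forall>k. k \<notin> K \<longrightarrow> y $ k = x $ k) \<longrightarrow> \<psi> y = \<psi> x" if "finite K" for K
    using that
  proof (induction K rule: finite_induct)
    case empty
    then show ?case by (simp add: vec_eq_iff[symmetric])
  next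
    case (insert k K)
    show ?case
    proof (intro ballI impI)
      fix y assume y: "y \<in> ball x r" "\<forall>i. i \<notin> insert k K \<longrightarrow> y $ i = x $ i"
      define y' where "y' = (\<chi> i. if i = k then x $ i else y $ i)"
      define d where "d = y $ k - x $ k"
      have seg: "\<forall>t\<in>{-\<bar>d\<bar>..\<bar>d\<bar>}. y' + t *\<^sub>R axis k 1 \<in> ball x r"
      proof
        fix t assume "t \<in> {-\<bar>d\<bar>..\<bar>d\<bar>}"
        then have "\<bar>t\<bar> \<le> \<bar>y $ k - x $ k\<bar>" unfolding d_def by auto
        then show "y' + t *\<^sub>R axis k 1 \<in> ball x r"
          unfolding y'_def by (rule ball_coordinate_segment[OF y(1)])
      qed
      then have "y' \<in> ball x r" using bspec[OF seg, of 0] by simp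
      moreover have "\<forall>i. i \<notin> K \<longrightarrow> y' $ i = x $ i" using y(2) unfolding y'_def by auto
      ultimately have "\<psi> y' = \<psi> x" using insert.IH by blast
      moreover have "\<psi> (y' + d *\<^sub>R axis k 1) = \<psi> y'"
      proof (rule constant_along_axis)
        show "\<forall>t\<in>{-\<bar>d\<bar>..\<bar>d\<bar>}. y' + t *\<^sub>R axis k 1 \<in> U" using seg sub by blast
        show "\<forall>z\<in>U. ((\<lambda>t. \<psi> (z + t *\<^sub>R axis k 1)) has_real_derivative 0) (at 0)" using D by blast
      qed
      moreover have "y' + d *\<^sub>R axis k 1 = y"
        unfolding y'_def d_def by (auto simp: vec_eq_iff axis_def)
      ultimately show "\<psi> y = \<psi> x" by simp
    qed
  qed
  from this[of UNIV] show ?thesis by simp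
qed

lemma partials_zero_imp_constant_on:
  fixes \<psi> :: "real^'i \<Rightarrow> real"
  assumes "open U" "connected U"
    and "\<forall>z\<in>U. \<forall>k. ((\<lambda>t. \<psi> (z + t *\<^sub>R axis k 1)) has_real_derivative 0) (at 0)"
  shows "\<psi> constant_on U"
proof (rule locally_constant_imp_constant[OF assms(2)])
  fix x assume "x \<in> U"
  then obtain r where r: "r > 0" "ball x r \<subseteq> U" using assms(1) open_contains_ball by blast
  show "\<exists>T. openin (top_of_set U) T \<and> x \<in> T \<and> (\<forall>y\<in>T. \<psi> y = \<psi> x)"
  proof (intro exI conjI)
    show "openin (top_of_set U) (ball x r)" using r(2) by (simp add: open_subset)
    show "x \<in> ball x r" using r(1) by simp
    show "\<forall>y\<in>ball x r. \<psi> y = \<psi> x" using partials_zero_constant_on_ball[OF r(2) assms(3)] .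
  qed
qed

lemma sum_mult_delta_right: "(\<Sum>d\<in>(UNIV::'i::finite set). f d * (if d = k then c else 0)) = f k * (c::real)"
  by (simp add: if_distrib[of "(*) _"] cong: if_cong)

lemma sum_mult_delta_left: "(\<Sum>d\<in>(UNIV::'i::finite set). (if d = k then c else 0) * f d) = (c::real) * f k"
  by (simp add: if_distrib[of "\<lambda>x. x * _"] cong: if_cong)

lemma nabla2_cong_open:
  assumes "open U" "p \<in> U" "\<forall>i j. \<forall>q\<in>U. h i j q = h' i j q"
  shows "nabla2 \<Gamma> h a b c p = nabla2 \<Gamma> h' a b c p"
proof -
  have "cpd a (h b c) p = cpd a (h' b c) p"
    unfolding cpd_def using assms by (intro pdv_cong_open) auto
  then show ?thesis using assms(2,3) unfolding nabla2_def by simp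
qed

lemma nabla2_conformal:
  assumes "(\<lambda>t. \<phi> (p + t *\<^sub>R axis a 1)) differentiable (at 0)"
    and "(\<lambda>t. g b c (p + t *\<^sub>R axis a 1)) differentiable (at 0)"
  shows "nabla2 \<Gamma> (\<lambda>i j q. \<phi> q * g i j q) a b c p = cpd a \<phi> p * g b c p + \<phi> p * nabla2 \<Gamma> g a b c p"
proof -
  have "cpd a (\<lambda>q. \<phi> q * g b c q) p = cpd a \<phi> p * g b c p + \<phi> p * cpd a (g b c) p"
    unfolding cpd_def
    using DERIV_mult[OF assms[THEN pdv_has_real_derivative]] by (intro pdv_eqI) (simp add: mult.commute)
  then show ?thesis
    unfolding nabla2_def by (simp add: sum_distrib_left algebra_simps)
qed

lemma proportional_if_equal_log_partials:
  fixes \<phi>1 \<phi>2 :: "real^'i \<Rightarrow> real"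
  assumes U: "connected U" and sm: "smooth_on U \<phi>1" "smooth_on U \<phi>2"
    and pos: "\<forall>p\<in>U. \<phi>1 p > 0" "\<forall>p\<in>U. \<phi>2 p > 0"
    and log: "\<forall>p\<in>U. \<forall>k. cpd k \<phi>2 p * \<phi>1 p = cpd k \<phi>1 p * \<phi>2 p"
  shows "\<exists>c>0. \<forall>p\<in>U. \<phi>2 p = c * \<phi>1 p"
proof -
  have "((\<lambda>t. \<phi>2 (z + t *\<^sub>R axis k 1) / \<phi>1 (z + t *\<^sub>R axis k 1)) has_real_derivative 0) (at 0)"
    if z: "z \<in> U" for z k
  proof -
    have "((\<lambda>t. \<phi>1 (z + t *\<^sub>R axis k 1)) has_real_derivative cpd k \<phi>1 z) (at 0)"
         "((\<lambda>t. \<phi>2 (z + t *\<^sub>R axis k 1)) has_real_derivative cpd k \<phi>2 z) (at 0)"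
      unfolding cpd_def using sm z axis_in_Basis
      by (blast intro: pdv_has_real_derivative smooth_on_line_differentiable)+
    moreover have "\<phi>1 (z + 0 *\<^sub>R axis k 1) \<noteq> 0" using pos z by fastforce
    ultimately show ?thesis
      using DERIV_divide log z by fastforce
  qed
  then obtain c where c: "\<forall>p\<in>U. \<phi>2 p / \<phi>1 p = c"
    using partials_zero_imp_constant_on[OF smooth_on_open[OF sm(1)] U, of "\<lambda>p. \<phi>2 p / \<phi>1 p"]
    unfolding constant_on_def by blast
  show ?thesis
  proof (cases "U = {}")
    case False
    then obtain p0 where "p0 \<in> U" by blast
    then have "c > 0" using c pos by force
    moreover have "\<forall>p\<in>U. \<phi>2 p = c * \<phi>1 p"
      using c pos by (metis divide_eq_eq less_irrefl)
    ultimately show ?thesis by blast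
  qed (auto intro: exI[of _ 1])
qed

lemma DERIV_powr_square_exp:
  fixes u v :: "real \<Rightarrow> real"
  assumes du: "(u has_real_derivative u') (at x)" and dv: "(v has_real_derivative v') (at x)"
    and nz: "u x \<noteq> 0"
  shows "((\<lambda>t. (u t * u t) powr (1/3) * exp (2/3 * v t)) has_real_derivative
           (u x * u x) powr (1/3) * exp (2/3 * v x) * (2/3) * (u' / u x + v')) (at x)"
proof -
  have pos: "u x * u x > 0" using nz by (auto simp: zero_less_mult_iff linorder_neq_iff)
  have "((\<lambda>t. u t * u t) has_real_derivative 2 * u' * u x) (at x)"
    using DERIV_mult[OF du du] by (simp add: algebra_simps)
  from DERIV_chain2[OF _ this, OF has_real_derivative_powr[OF pos]]
  have powr: "((\<lambda>t. (u t * u t) powr (1/3)) has_real_derivative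
      1/3 * (u x * u x) powr (1/3 - 1) * (2 * u' * u x)) (at x)" .
  have "((\<lambda>t. exp (2/3 * v t)) has_real_derivative exp (2/3 * v x) * (2/3 * v')) (at x)"
    by (rule DERIV_chain2[OF DERIV_exp]) (intro DERIV_cmult dv)
  from DERIV_mult'[OF powr this] show ?thesis
  proof (rule DERIV_cong)
    have "(u x * u x) powr (1/3 - 1) = (u x * u x) powr (1/3) / (u x * u x)"
      using pos powr_diff[of "u x * u x" "1/3" 1] by simp
    then show "(u x * u x) powr (1/3) * (exp (2/3 * v x) * (2/3 * v'))
        + 1/3 * (u x * u x) powr (1/3 - 1) * (2 * u' * u x) * exp (2/3 * v x)
        = (u x * u x) powr (1/3) * exp (2/3 * v x) * (2/3) * (u' / u x + v')"
      using nz by (simp add: field_simps)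
  qed
qed

definition recurrence_gauge ::
  "(real^'i::finite) set \<Rightarrow> ('i \<Rightarrow> 'i \<Rightarrow> 'i \<Rightarrow> real^'i \<Rightarrow> real) \<Rightarrow> ('i \<Rightarrow> 'i \<Rightarrow> real^'i \<Rightarrow> real)
     \<Rightarrow> ('i \<Rightarrow> 'i \<Rightarrow> real^'i \<Rightarrow> real) \<Rightarrow> ('i \<Rightarrow> real^'i \<Rightarrow> real) \<Rightarrow> bool" where
  "recurrence_gauge U \<Gamma> g h w \<longleftrightarrow> conformal_on U g h \<and> (\<forall>k. smooth_on U (w k)) \<and>
     (\<forall>p\<in>U. (\<forall>a b c. nabla2 \<Gamma> h a b c p = - 2 * w a p * h b c p) \<and>
             (\<forall>e d c a b. nabla13 \<Gamma> (curv \<Gamma>) e d c a b p = - 3 * w e p * curv \<Gamma> d c a b p))"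

locale ppw_weyl =
  fixes iv iu ixn :: "'i::finite"
    and U :: "(real^'i) set"
    and W :: "(real \<times> real) set"
    and A :: "real set"
    and F :: "real \<times> real \<Rightarrow> real"
    and a :: "real \<Rightarrow> real"
    and \<Gamma> :: "'i \<Rightarrow> 'i \<Rightarrow> 'i \<Rightarrow> real^'i \<Rightarrow> real"
  assumes idx: "iv \<noteq> iu" "iv \<noteq> ixn" "iu \<noteq> ixn"
    and U_open: "open U"
    and F_smooth: "smooth_on W F" and F_dom: "\<forall>p\<in>U. (p $ ixn, p $ iu) \<in> W"
    and a_smooth: "smooth_on A a" and a_dom: "\<forall>p\<in>U. p $ iu \<in> A"
    and weyl: "weyl_connection U (ppw_metric iv iu ixn F a) (ppw_form iu ixn F) \<Gamma>"
begin

abbreviation "g \<equiv> ppw_metric iv iu ixn F a"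
abbreviation "\<omega> \<equiv> ppw_form iu ixn F"
abbreviation "Fu \<equiv> pdv (0, 1) F"
abbreviation "Fxu \<equiv> pdv (1, 0) (pdv (0, 1) F)"
abbreviation plane :: "real^'i \<Rightarrow> real \<times> real" where
  "plane p \<equiv> (p $ ixn, p $ iu)"
abbreviation dir :: "'i \<Rightarrow> real \<times> real" where
  "dir k \<equiv> axis_pair ixn iu k"
abbreviation Gamma_low :: "'i \<Rightarrow> 'i \<Rightarrow> 'i \<Rightarrow> real^'i \<Rightarrow> real" where
  "Gamma_low c a' b p \<equiv> (\<Sum>d\<in>UNIV. \<Gamma> d a' b p * g d c p)"

lemma dir_xn: "dir ixn = (1, 0)"
  using idx by (simp add: axis_pair_def axis_def)

lemma dir_other: "k \<noteq> ixn \<Longrightarrow> k \<noteq> iu \<Longrightarrow> dir k = 0"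
  by (simp add: axis_pair_def axis_def zero_prod_def)

lemma smooth_Fu: "smooth_on W Fu"
  using F_smooth by (rule smooth_on_pdv) (simp add: Basis_prod_def)

lemma smooth_Fxu: "smooth_on W Fxu"
  using smooth_Fu by (rule smooth_on_pdv) (simp add: Basis_prod_def)

lemma plane_has_real_derivative:
  assumes "smooth_on W G" "p \<in> U"
  shows "((\<lambda>t. G (plane (p + t *\<^sub>R axis k 1))) has_real_derivative pdv (dir k) G (plane p)) (at 0)"
  using coordinate_pair_has_real_derivative[OF idx(3)[symmetric] assms(1)] F_dom assms(2) by blast

lemma metric_sym: "g i j p = g j i p"
proof (cases "i = j")
  case False
  then have "((i = iv \<and> j = iu) \<or> (i = iu \<and> j = iv)) = ((j = iv \<and> i = iu) \<or> (j = iu \<and> i = iv))"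
    "\<not> (i = j \<and> i \<notin> {iv, iu, ixn})" "\<not> (j = i \<and> j \<notin> {iv, iu, ixn})"
    "\<not> (i = ixn \<and> j = ixn)" "\<not> (j = ixn \<and> i = ixn)" "\<not> (i = iu \<and> j = iu)" "\<not> (j = iu \<and> i = iu)"
    by auto
  then show ?thesis unfolding ppw_metric_def by (simp only: if_False)
qed simp

lemma metric_v: "g k iv p = (if k = iu then 1 else 0)"
  unfolding ppw_metric_def using idx by auto

lemma metric_xn: "g k ixn p = (if k = ixn then exp (- 2 * F (plane p)) else 0)"
  unfolding ppw_metric_def using idx by auto

lemma form_eq: "\<omega> k p = (if k = iu then Fu (plane p) else 0)"
  unfolding ppw_form_def by simp

lemma Gamma_sym: "p \<in> U \<Longrightarrow> \<Gamma> k a' b p = \<Gamma> k b a' p"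
  using weyl unfolding weyl_connection_def by blast

lemma metric_compat:
  assumes "p \<in> U"
  shows "cpd a' (g b c) p - Gamma_low c a' b p - Gamma_low b a' c p = - 2 * \<omega> a' p * g b c p"
proof -
  have "nabla2 \<Gamma> g a' b c p = - 2 * \<omega> a' p * g b c p"
    using weyl assms unfolding weyl_connection_def by blast
  moreover have "(\<Sum>d\<in>UNIV. \<Gamma> d a' c p * g b d p) = Gamma_low b a' c p"
    using metric_sym by metis
  ultimately show ?thesis unfolding nabla2_def by simp
qed

lemma cpd_metric_v: "cpd iv (g b c) p = 0"
proof -
  have "g b c (p + t *\<^sub>R axis iv 1) = g b c p" for t
  proof -
    have "(\<Sum>k\<in>UNIV - {iv, iu, ixn}. ((p + t *\<^sub>R axis iv 1) $ k)^2) = (\<Sum>k\<in>UNIV - {iv, iu, ixn}. (p $ k)^2)"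
      by (intro sum.cong) (auto simp: axis_def)
    moreover have "(p + t *\<^sub>R axis iv 1) $ iu = p $ iu" "(p + t *\<^sub>R axis iv 1) $ ixn = p $ ixn"
      using idx by (auto simp: axis_def)
    ultimately show ?thesis unfolding ppw_metric_def by (simp only:)
  qed
  then show ?thesis unfolding cpd_def pdv_def by simp
qed

text \<open>The Koszul-type combination of three compatibility equations with one index equal
  to \<open>v\<close> isolates \<open>\<Gamma>\<^sup>u\<close>, because \<open>g\<close> does not depend on \<open>v\<close> and \<open>g(\<partial>\<^sub>v, -)\<close> is constant.\<close>
lemma Gamma_u:
  assumes p: "p \<in> U"
  shows "\<Gamma> iu a' b p = (if a' = iu \<and> b = iu then 2 * Fu (plane p) else 0)"
proof -
  have low_v: "Gamma_low iv c d p = \<Gamma> iu c d p" for c d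
    unfolding metric_v sum_mult_delta_right by simp
  have "g b iv = (\<lambda>q. if b = iu then 1 else 0)" for b
    using metric_v by auto
  then have const: "cpd a' (g b iv) p = 0" "cpd b (g a' iv) p = 0"
    by simp_all
  have "2 * Gamma_low iv a' b p = 2 * \<omega> a' p * g b iv p + 2 * \<omega> b p * g a' iv p"
    using metric_compat[OF p, of a' b iv] metric_compat[OF p, of b a' iv] metric_compat[OF p, of iv a' b]
      const cpd_metric_v[of a' b p] Gamma_sym[OF p, of _ a' b] Gamma_sym[OF p, of _ iv a']
      Gamma_sym[OF p, of _ iv b] form_eq[of iv p] idx(1)
    by simp
  then have "\<Gamma> iu a' b p = \<omega> a' p * g b iv p + \<omega> b p * g a' iv p"
    unfolding low_v by simp
  then show ?thesis unfolding form_eq metric_v by auto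
qed

lemma Gamma_xn_xn:
  assumes p: "p \<in> U"
  shows "\<Gamma> ixn e ixn p = \<omega> e p - pdv (dir e) F (plane p)"
proof -
  let ?E = "exp (- 2 * F (plane p))"
  have "((\<lambda>t. exp (- 2 * F (plane (p + t *\<^sub>R axis e 1)))) has_real_derivative
          exp (- 2 * F (plane (p + 0 *\<^sub>R axis e 1))) * (- 2 * pdv (dir e) F (plane p))) (at 0)"
    by (rule DERIV_chain2[OF DERIV_exp]) (intro DERIV_cmult plane_has_real_derivative F_smooth p)
  moreover have "g ixn ixn = (\<lambda>q. exp (- 2 * F (plane q)))"
    using metric_xn by auto
  ultimately have "cpd e (g ixn ixn) p = ?E * (- 2 * pdv (dir e) F (plane p))"
    unfolding cpd_def by (intro pdv_eqI) simp
  moreover have "Gamma_low ixn e ixn p = \<Gamma> ixn e ixn p * ?E"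
    unfolding metric_xn sum_mult_delta_right by simp
  ultimately have "?E * (- 2 * pdv (dir e) F (plane p)) - 2 * (\<Gamma> ixn e ixn p * ?E) = - 2 * \<omega> e p * ?E"
    using metric_compat[OF p, of e ixn ixn] metric_xn[of ixn p] by simp
  then have "?E * (\<Gamma> ixn e ixn p - \<omega> e p + pdv (dir e) F (plane p)) = 0"
    by (simp add: algebra_simps)
  then show ?thesis by simp
qed

lemma cpd_Gamma_u:
  assumes p: "p \<in> U"
  shows "cpd a' (\<Gamma> iu b c) p = (if b = iu \<and> c = iu then 2 * pdv (dir a') Fu (plane p) else 0)"
proof (cases "b = iu \<and> c = iu")
  case True
  have "((\<lambda>t. 2 * Fu (plane (p + t *\<^sub>R axis a' 1))) has_real_derivative 2 * pdv (dir a') Fu (plane p)) (at 0)"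
    using plane_has_real_derivative[OF smooth_Fu p] by (rule DERIV_cmult)
  moreover have "\<forall>q\<in>U. 2 * Fu (plane q) = \<Gamma> iu b c q" using Gamma_u True by simp
  ultimately show ?thesis
    unfolding cpd_def using True by (simp add: pdv_eqI line_derivative_cong_open[OF U_open p])
next
  case False
  then have "\<forall>q\<in>U. 0 = \<Gamma> iu b c q" using Gamma_u by auto
  then have "cpd a' (\<Gamma> iu b c) p = cpd a' (\<lambda>q. 0) p"
    unfolding cpd_def using pdv_cong_open[OF U_open p] by metis
  with False show ?thesis by (simp only: if_False cpd_const)
qed

lemma curv_u:
  assumes p: "p \<in> U"
  shows "curv \<Gamma> iu c a' b p =
    2 * (if c = iu then (if b = iu then pdv (dir a') Fu (plane p) else 0)
                      - (if a' = iu then pdv (dir b) Fu (plane p) else 0) else 0)"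
proof -
  have quad: "(\<Sum>e\<in>UNIV. \<Gamma> iu x e p * \<Gamma> e y c p) = (if x = iu then 2 * Fu (plane p) else 0) * \<Gamma> iu y c p"
    for x y
  proof -
    have "(\<Sum>e\<in>UNIV. \<Gamma> iu x e p * \<Gamma> e y c p) =
        (\<Sum>e\<in>UNIV. (if e = iu then (if x = iu then 2 * Fu (plane p) else 0) else 0) * \<Gamma> e y c p)"
      using Gamma_u[OF p] by (intro sum.cong) auto
    then show ?thesis by (simp only: sum_mult_delta_left)
  qed
  have "(\<Sum>e\<in>UNIV. \<Gamma> iu a' e p * \<Gamma> e b c p - \<Gamma> iu b e p * \<Gamma> e a' c p) = 0"
    unfolding sum_subtractf quad by (simp add: Gamma_u[OF p])
  then show ?thesis unfolding curv_def cpd_Gamma_u[OF p] by simp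
qed

abbreviation "R0 \<equiv> curv \<Gamma> iu iu ixn iu"

lemma R0_eq: "p \<in> U \<Longrightarrow> R0 p = 2 * Fxu (plane p)"
  using curv_u[of p iu ixn iu] idx(3) dir_xn by simp

lemma cpd_R0:
  assumes p: "p \<in> U"
  shows "cpd e R0 p = 2 * pdv (dir e) Fxu (plane p)"
proof -
  have "((\<lambda>t. 2 * Fxu (plane (p + t *\<^sub>R axis e 1))) has_real_derivative 2 * pdv (dir e) Fxu (plane p)) (at 0)"
    using plane_has_real_derivative[OF smooth_Fxu p] by (rule DERIV_cmult)
  moreover have "\<forall>q\<in>U. 2 * Fxu (plane q) = R0 q" using R0_eq by simp
  ultimately show ?thesis
    unfolding cpd_def by (intro pdv_eqI) (rule line_derivative_cong_open[OF U_open p])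
qed

lemma nabla_R0:
  assumes p: "p \<in> U"
  shows "nabla13 \<Gamma> (curv \<Gamma>) e iu iu ixn iu p =
    2 * pdv (dir e) Fxu (plane p) - 2 * Fxu (plane p) * \<Gamma> ixn e ixn p - 4 * \<omega> e p * Fxu (plane p)"
proof -
  have R_1: "curv \<Gamma> iu f ixn iu p = (if f = iu then 2 * Fxu (plane p) else 0)" for f
    using curv_u[OF p, of f ixn iu] idx(3) dir_xn by simp
  have R_4: "curv \<Gamma> iu iu ixn f p = (if f = iu then 2 * Fxu (plane p) else 0)" for f
    using curv_u[OF p, of iu ixn f] idx(3) dir_xn by simp
  have R_3: "curv \<Gamma> iu iu f iu p = (if f = ixn then 2 * Fxu (plane p) else 0)" for f
    using curv_u[OF p, of iu f iu] idx(3) dir_xn dir_other[of f] by (cases "f = ixn"; cases "f = iu") simp_all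
  have G_u: "\<Gamma> iu e f p = (if f = iu then (if e = iu then 2 * Fu (plane p) else 0) else 0)"
    "\<Gamma> iu e iu p = (if e = iu then 2 * Fu (plane p) else 0)" for f
    using Gamma_u[OF p] by simp_all
  have "(\<Sum>f\<in>UNIV. \<Gamma> iu e f p * curv \<Gamma> f iu ixn iu p) = (if e = iu then 2 * Fu (plane p) else 0) * R0 p"
    unfolding G_u(1) sum_mult_delta_left ..
  then show ?thesis
    unfolding nabla13_def R_1 R_3 R_4 sum_mult_delta_right cpd_R0[OF p] G_u(2)
    using R0_eq[OF p] form_eq[of e p] by simp
qed

lemma recurrence_form_eq:
  assumes p: "p \<in> U" and nz: "Fxu (plane p) \<noteq> 0"
    and rec: "nabla13 \<Gamma> (curv \<Gamma>) e iu iu ixn iu p = \<theta> * R0 p"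
  shows "\<theta> = pdv (dir e) Fxu (plane p) / Fxu (plane p) + pdv (dir e) F (plane p) - 3 * \<omega> e p"
proof -
  have "\<theta> * (2 * Fxu (plane p)) = 2 * pdv (dir e) Fxu (plane p)
      - 2 * Fxu (plane p) * (\<omega> e p - pdv (dir e) F (plane p)) - 4 * \<omega> e p * Fxu (plane p)"
    using rec unfolding nabla_R0[OF p] R0_eq[OF p] Gamma_xn_xn[OF p] by simp
  with nz show ?thesis by (simp add: field_simps)
qed

lemma metric_line_differentiable:
  assumes p: "p \<in> U"
  shows "(\<lambda>t. g b c (p + t *\<^sub>R axis e 1)) differentiable (at 0)"
proof -
  have "((\<lambda>t. exp (- 2 * F (plane (p + t *\<^sub>R axis e 1)))) has_real_derivative
          exp (- 2 * F (plane (p + 0 *\<^sub>R axis e 1))) * (- 2 * pdv (dir e) F (plane p))) (at 0)"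
    by (rule DERIV_chain2[OF DERIV_exp]) (intro DERIV_cmult plane_has_real_derivative F_smooth p)
  then have exp_F: "(\<lambda>t. exp (- 2 * F (plane (p + t *\<^sub>R axis e 1)))) differentiable (at 0)"
    using real_differentiable_def by blast
  have "a differentiable (at ((\<lambda>t. p $ iu + t * axis e 1 $ iu) 0))"
    using smooth_on_real_differentiable[OF a_smooth] a_dom p by simp
  moreover have "(\<lambda>t. p $ iu + t * axis e 1 $ iu) differentiable (at 0)"
    by simp
  ultimately have "(\<lambda>t. a (p $ iu + t * axis e 1 $ iu)) differentiable (at 0)"
    by (rule differentiable_compose)
  then have a_line: "(\<lambda>t. a ((p + t *\<^sub>R axis e 1) $ iu)) differentiable (at 0)"
    by simp
  have if_differentiable: "(\<lambda>t. if C then f t else f' t) differentiable (at 0)"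
    if "f differentiable (at 0)" "f' differentiable (at 0)" for C and f f' :: "real \<Rightarrow> real"
    using that by (cases C) simp_all
  have "(\<lambda>t. \<Sum>k\<in>UNIV - {iv, iu, ixn}. ((p + t *\<^sub>R axis e 1) $ k)\<^sup>2) differentiable (at 0)"
    by simp
  then show ?thesis
    unfolding ppw_metric_def
    by (intro if_differentiable differentiable_const exp_F differentiable_mult a_line)
qed

definition gauge_factor :: "real^'i \<Rightarrow> real" where
  "gauge_factor q = (Fxu (plane q) * Fxu (plane q)) powr (1/3) * exp (2/3 * F (plane q))"

lemma gauge_factor_pos: "Fxu (plane p) \<noteq> 0 \<Longrightarrow> gauge_factor p > 0"
  unfolding gauge_factor_def by simp

lemma smooth_gauge_factor:
  assumes nondeg: "\<forall>p\<in>U. Fxu (plane p) \<noteq> 0"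
  shows "smooth_on U gauge_factor"
proof -
  have Fxu: "smooth_on U (\<lambda>q. Fxu (plane q))" and F: "smooth_on U (\<lambda>q. F (plane q))"
    using smooth_on_coordinate_pair[OF idx(3)[symmetric] U_open] smooth_Fxu F_smooth F_dom by blast+
  have "smooth_on U (\<lambda>q. (Fxu (plane q) * Fxu (plane q)) powr (1/3))"
    using nondeg by (intro smooth_on_powr smooth_on_mult Fxu) (auto simp: zero_less_mult_iff linorder_neq_iff)
  moreover have "smooth_on U (\<lambda>q. exp (2/3 * F (plane q)))"
    by (intro smooth_on_exp smooth_on_mult smooth_on_const U_open F)
  ultimately show ?thesis
    unfolding gauge_factor_def[abs_def] by (rule smooth_on_mult)
qed

lemma cpd_gauge_factor:
  assumes p: "p \<in> U" and nz: "Fxu (plane p) \<noteq> 0"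
  shows "cpd e gauge_factor p =
    gauge_factor p * (2/3) * (pdv (dir e) Fxu (plane p) / Fxu (plane p) + pdv (dir e) F (plane p))"
proof -
  have "((\<lambda>t. gauge_factor (p + t *\<^sub>R axis e 1)) has_real_derivative
      gauge_factor p * (2/3) * (pdv (dir e) Fxu (plane p) / Fxu (plane p) + pdv (dir e) F (plane p))) (at 0)"
    using DERIV_powr_square_exp[OF plane_has_real_derivative[OF smooth_Fxu p]
        plane_has_real_derivative[OF F_smooth p]] nz
    unfolding gauge_factor_def by simp
  then show ?thesis
    unfolding cpd_def by (rule pdv_eqI)
qed

lemma cpd_conformal_factor:
  assumes sm: "smooth_on U \<phi>" and h: "\<forall>i j. \<forall>q\<in>U. h i j q = \<phi> q * g i j q" and p: "p \<in> U"
    and nabla_h: "nabla2 \<Gamma> h a' iv iu p = - 2 * w * h iv iu p"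
  shows "cpd a' \<phi> p = 2 * \<phi> p * (\<omega> a' p - w)"
proof -
  have "nabla2 \<Gamma> h a' iv iu p = nabla2 \<Gamma> (\<lambda>i j q. \<phi> q * g i j q) a' iv iu p"
    using nabla2_cong_open[OF U_open p h] .
  also have "\<dots> = cpd a' \<phi> p * g iv iu p + \<phi> p * nabla2 \<Gamma> g a' iv iu p"
    using smooth_on_line_differentiable[OF sm axis_in_Basis p] metric_line_differentiable[OF p]
    by (rule nabla2_conformal)
  finally have "nabla2 \<Gamma> h a' iv iu p = cpd a' \<phi> p * g iv iu p + \<phi> p * nabla2 \<Gamma> g a' iv iu p" .
  moreover have "nabla2 \<Gamma> g a' iv iu p = - 2 * \<omega> a' p * g iv iu p"
    using weyl p unfolding weyl_connection_def by blast
  moreover have "g iv iu p = 1" "h iv iu p = \<phi> p"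
    using h p metric_sym[of iv iu p] metric_v[of iu p] by simp_all
  ultimately show ?thesis
    using nabla_h by (simp add: algebra_simps)
qed

lemma recurrence_gauge_exists:
  assumes nondeg: "\<forall>p\<in>U. Fxu (plane p) \<noteq> 0"
    and \<theta>_smooth: "\<forall>e. smooth_on U (\<theta> e)"
    and rec: "\<forall>p\<in>U. \<forall>e d c a' b. nabla13 \<Gamma> (curv \<Gamma>) e d c a' b p = \<theta> e p * curv \<Gamma> d c a' b p"
  shows "recurrence_gauge U \<Gamma> g (\<lambda>i j p. gauge_factor p * g i j p) (\<lambda>e p. - (1/3) * \<theta> e p)"
  unfolding recurrence_gauge_def
proof (intro conjI allI ballI)
  show "conformal_on U g (\<lambda>i j p. gauge_factor p * g i j p)"
    unfolding conformal_on_def using smooth_gauge_factor[OF nondeg] gauge_factor_pos nondeg by blast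
  show "smooth_on U (\<lambda>p. - (1/3) * \<theta> e p)" for e
    using smooth_on_mult[OF smooth_on_const[OF U_open] \<theta>_smooth[rule_format]] .
  fix p assume p: "p \<in> U"
  show "nabla13 \<Gamma> (curv \<Gamma>) e d c a' b p = - 3 * (- (1/3) * \<theta> e p) * curv \<Gamma> d c a' b p" for e d c a' b
    using rec p by simp
  fix a' b c
  let ?X = "pdv (dir a') Fxu (plane p) / Fxu (plane p) + pdv (dir a') F (plane p)"
  have "nabla2 \<Gamma> (\<lambda>i j q. gauge_factor q * g i j q) a' b c p =
      cpd a' gauge_factor p * g b c p + gauge_factor p * nabla2 \<Gamma> g a' b c p"
    using smooth_on_line_differentiable[OF smooth_gauge_factor[OF nondeg] axis_in_Basis p]
      metric_line_differentiable[OF p]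
    by (rule nabla2_conformal)
  also have "\<dots> = gauge_factor p * (2/3) * ?X * g b c p + gauge_factor p * (- 2 * \<omega> a' p * g b c p)"
    using cpd_gauge_factor[OF p] nondeg p weyl unfolding weyl_connection_def by simp
  also have "\<dots> = - 2 * (- (1/3) * (?X - 3 * \<omega> a' p)) * (gauge_factor p * g b c p)"
    by (simp add: algebra_simps)
  also have "?X - 3 * \<omega> a' p = \<theta> a' p"
    using recurrence_form_eq[OF p, of a' "\<theta> a' p"] nondeg rec p by simp
  finally show "nabla2 \<Gamma> (\<lambda>i j q. gauge_factor q * g i j q) a' b c p =
      - 2 * (- (1/3) * \<theta> a' p) * (gauge_factor p * g b c p)" .
qed

lemma recurrence_gauge_unique:
  assumes U_conn: "connected U" and nondeg: "\<forall>p\<in>U. Fxu (plane p) \<noteq> 0"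
    and gauge1: "recurrence_gauge U \<Gamma> g h1 w1" and gauge2: "recurrence_gauge U \<Gamma> g h2 w2"
  shows "\<exists>c>0. \<forall>i j. \<forall>p\<in>U. h2 i j p = c * h1 i j p"
proof -
  obtain \<phi>1 where \<phi>1: "smooth_on U \<phi>1" "\<forall>p\<in>U. \<phi>1 p > 0" "\<forall>i j. \<forall>p\<in>U. h1 i j p = \<phi>1 p * g i j p"
    using gauge1 unfolding recurrence_gauge_def conformal_on_def by blast
  obtain \<phi>2 where \<phi>2: "smooth_on U \<phi>2" "\<forall>p\<in>U. \<phi>2 p > 0" "\<forall>i j. \<forall>p\<in>U. h2 i j p = \<phi>2 p * g i j p"
    using gauge2 unfolding recurrence_gauge_def conformal_on_def by blast
  have same_form: "w1 k p = w2 k p" if p: "p \<in> U" for k p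
  proof -
    have "- 3 * w1 k p * R0 p = - 3 * w2 k p * R0 p"
      using gauge1 gauge2 p unfolding recurrence_gauge_def by metis
    then show ?thesis using R0_eq[OF p] nondeg p by simp
  qed
  have "cpd k \<phi>1 p = 2 * \<phi>1 p * (\<omega> k p - w1 k p)" "cpd k \<phi>2 p = 2 * \<phi>2 p * (\<omega> k p - w1 k p)"
    if p: "p \<in> U" for k p
    using cpd_conformal_factor[OF \<phi>1(1,3) p] cpd_conformal_factor[OF \<phi>2(1,3) p]
      gauge1 gauge2 same_form[OF p] p unfolding recurrence_gauge_def by metis+
  then have "\<forall>p\<in>U. \<forall>k. cpd k \<phi>2 p * \<phi>1 p = cpd k \<phi>1 p * \<phi>2 p"
    by simp
  then obtain c where "c > 0" "\<forall>p\<in>U. \<phi>2 p = c * \<phi>1 p"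
    using proportional_if_equal_log_partials[OF U_conn \<phi>1(1) \<phi>2(1) \<phi>1(2) \<phi>2(2)] by blast
  then show ?thesis using \<phi>1(3) \<phi>2(3) by auto
qed

end

theorem mainTheorem14:
  fixes iv iu ixn :: "'i::finite"
    and U :: "(real^'i) set"
    and W :: "(real \<times> real) set"
    and A :: "real set"
    and F :: "real \<times> real \<Rightarrow> real"
    and a :: "real \<Rightarrow> real"
    and \<Gamma> :: "'i \<Rightarrow> 'i \<Rightarrow> 'i \<Rightarrow> real^'i \<Rightarrow> real"
  assumes dim: "CARD('i) \<ge> 4"
    and idx: "iv \<noteq> iu" "iv \<noteq> ixn" "iu \<noteq> ixn"
    and U_open: "open U" and U_conn: "connected U"
    and F_smooth: "smooth_on W F" and F_dom: "\<forall>p\<in>U. (p $ ixn, p $ iu) \<in> W"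
    and a_smooth: "smooth_on A a" and a_dom: "\<forall>p\<in>U. p $ iu \<in> A"
    and F_eq: "\<forall>p\<in>U. pdv (0, 1) (pdv (0, 1) F) (p $ ixn, p $ iu)
                       - (pdv (0, 1) F (p $ ixn, p $ iu))^2 = - a (p $ iu)"
    and F_nondeg: "\<forall>p\<in>U. pdv (1, 0) (pdv (0, 1) F) (p $ ixn, p $ iu) \<noteq> 0"
    and weyl: "weyl_connection U (ppw_metric iv iu ixn F a) (ppw_form iu ixn F) \<Gamma>"
    and recurrent: "\<exists>\<theta>. (\<forall>e. smooth_on U (\<theta> e)) \<and>
           (\<forall>p\<in>U. \<forall>e d c a' b. nabla13 \<Gamma> (curv \<Gamma>) e d c a' b p = \<theta> e p * curv \<Gamma> d c a' b p)"
  shows "(\<exists>h w. conformal_on U (ppw_metric iv iu ixn F a) h \<and> (\<forall>k. smooth_on U (w k)) \<and>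
            (\<forall>p\<in>U. (\<forall>a' b c. nabla2 \<Gamma> h a' b c p = - 2 * w a' p * h b c p) \<and>
                    (\<forall>e d c a' b. nabla13 \<Gamma> (curv \<Gamma>) e d c a' b p = - 3 * w e p * curv \<Gamma> d c a' b p)))
       \<and> (\<forall>h1 w1 h2 w2.
            conformal_on U (ppw_metric iv iu ixn F a) h1 \<and> (\<forall>k. smooth_on U (w1 k)) \<and>
            (\<forall>p\<in>U. (\<forall>a' b c. nabla2 \<Gamma> h1 a' b c p = - 2 * w1 a' p * h1 b c p) \<and>
                    (\<forall>e d c a' b. nabla13 \<Gamma> (curv \<Gamma>) e d c a' b p = - 3 * w1 e p * curv \<Gamma> d c a' b p)) \<and>
            conformal_on U (ppw_metric iv iu ixn F a) h2 \<and> (\<forall>k. smooth_on U (w2 k)) \<and>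
            (\<forall>p\<in>U. (\<forall>a' b c. nabla2 \<Gamma> h2 a' b c p = - 2 * w2 a' p * h2 b c p) \<and>
                    (\<forall>e d c a' b. nabla13 \<Gamma> (curv \<Gamma>) e d c a' b p = - 3 * w2 e p * curv \<Gamma> d c a' b p))
            \<longrightarrow> (\<exists>c>0. \<forall>i j. \<forall>p\<in>U. h2 i j p = c * h1 i j p))"
proof -
  (* F_eq and dim are what make R recurrent in the paper; recurrence is assumed here. *)
  interpret ppw_weyl iv iu ixn U W A F a \<Gamma>
    using idx U_open F_smooth F_dom a_smooth a_dom weyl by unfold_locales
  obtain \<theta> where "\<forall>e. smooth_on U (\<theta> e)"
    "\<forall>p\<in>U. \<forall>e d c a' b. nabla13 \<Gamma> (curv \<Gamma>) e d c a' b p = \<theta> e p * curv \<Gamma> d c a' b p"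
    using recurrent by blast
  then have "\<exists>h w. recurrence_gauge U \<Gamma> (ppw_metric iv iu ixn F a) h w"
    using recurrence_gauge_exists[OF F_nondeg] by blast
  moreover have "\<exists>c>0. \<forall>i j. \<forall>p\<in>U. h2 i j p = c * h1 i j p"
    if "recurrence_gauge U \<Gamma> (ppw_metric iv iu ixn F a) h1 w1"
       "recurrence_gauge U \<Gamma> (ppw_metric iv iu ixn F a) h2 w2" for h1 w1 h2 w2
    using recurrence_gauge_unique[OF U_conn F_nondeg that] .
  ultimately show ?thesis
    unfolding recurrence_gauge_def by (intro conjI allI impI) (blast, (elim conjE, blast))
qed

end
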